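(* Assume that for every $n \ge 1$ and all $y_1, \dots, y_n \in \mathscr{L}$ that are linearly independent over $\mathbf{Q}$, one has $\operatorname{trdeg}_{\mathbf{Q}} \mathbf{Q}(y_1, \dots, y_n) = n$. Then for all positive integers $m, n$, every matrix $M \in M_{m \times n}(\mathscr{L} + \mathbf{Q})$ has rank (over $\mathbf{C}$) equal to its structural rank.
   Context: $\mathscr{L} = \{x \in \mathbf{C} : e^x \in \overline{\mathbf{Q}}\}$, a $\mathbf{Q}$-vector space, and $\mathscr{L} + \mathbf{Q}$ is the $\mathbf{Q}$-span of $\mathscr{L}$ and $\mathbf{Q}$ in $\mathbf{C}$. Structural rank: choose a $\mathbf{Q}$-basis $\ell_1, \dots, \ell_k$ of the $\mathbf{Q}$-span of the entries of $M$, write $M = \sum_i \ell_i M_i$ with $M_i \in M_{m \times n}(\mathbf{Q})$, and define the structural rank of $M$ to be the rank of $\sum_i x_i M_i$ over the rational function field $\mathbf{Q}(x_1, \dots, x_k)$ (this is independent of the choice of basis). *)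

theory Defs
  imports "Jordan_Normal_Form.DL_Rank" "HOL-Library.Poly_Mapping"
    "HOL-Computational_Algebra.Fraction_Field" "HOL-Computational_Algebra.Polynomial"
begin

definition Lset :: "complex set" where
  "Lset = {x. algebraic (exp x)}"

definition qspan :: "complex set \<Rightarrow> complex set" where
  "qspan A = {x. \<exists>F c. finite F \<and> F \<subseteq> A \<and> x = (\<Sum>a\<in>F. of_rat (c a) * a)}"

definition q_indep :: "nat \<Rightarrow> (nat \<Rightarrow> complex) \<Rightarrow> bool" where
  "q_indep n y \<longleftrightarrow>
     (\<forall>c :: nat \<Rightarrow> rat. (\<Sum>i<n. of_rat (c i) * y i) = 0 \<longrightarrow> (\<forall>i<n. c i = 0))"

text \<open>Multivariate polynomials over Q: (nat =>0 nat) =>0 rat (monomial exponent vector to coefficient).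
  Evaluation at a point y.\<close>
definition mpoly_eval :: "((nat \<Rightarrow>\<^sub>0 nat) \<Rightarrow>\<^sub>0 rat) \<Rightarrow> (nat \<Rightarrow> complex) \<Rightarrow> complex" where
  "mpoly_eval p y =
     (\<Sum>\<alpha>\<in>Poly_Mapping.keys p. of_rat (Poly_Mapping.lookup p \<alpha>) * (\<Prod>i\<in>Poly_Mapping.keys \<alpha>. y i ^ Poly_Mapping.lookup \<alpha> i))"

text \<open>y_0, ..., y_(n-1) are algebraically independent over Q, i.e.
  trdeg_Q Q(y_0,...,y_(n-1)) = n.\<close>
definition alg_indep :: "nat \<Rightarrow> (nat \<Rightarrow> complex) \<Rightarrow> bool" where
  "alg_indep n y \<longleftrightarrow>
     (\<forall>p. (\<forall>\<alpha>\<in>Poly_Mapping.keys p. Poly_Mapping.keys \<alpha> \<subseteq> {..<n}) \<longrightarrow> mpoly_eval p y = 0 \<longrightarrow> p = 0)"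

text \<open>The rational function field Q(x_0, x_1, ...) as the fraction field of Q[x_0, x_1, ...].\<close>
type_synonym ratfun = "((nat \<Rightarrow>\<^sub>0 nat) \<Rightarrow>\<^sub>0 rat) fract"

definition rf_const :: "rat \<Rightarrow> ratfun" where
  "rf_const q = Fract (Poly_Mapping.single 0 q) 1"

definition rf_var :: "nat \<Rightarrow> ratfun" where
  "rf_var i = Fract (Poly_Mapping.single (Poly_Mapping.single i 1) 1) 1"

definition mat_entries :: "'a mat \<Rightarrow> 'a set" where
  "mat_entries M = {M $$ (i, j) | i j. i < dim_row M \<and> j < dim_col M}"

definition struct_decomp :: "complex mat \<Rightarrow> nat \<Rightarrow> (nat \<Rightarrow> complex) \<Rightarrow> (nat \<Rightarrow> rat mat) \<Rightarrow> bool" where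
  "struct_decomp M k l Ms \<longleftrightarrow>
     q_indep k l \<and> qspan (l ` {..<k}) = qspan (mat_entries M) \<and>
     (\<forall>i<k. Ms i \<in> carrier_mat (dim_row M) (dim_col M)) \<and>
     M = mat (dim_row M) (dim_col M) (\<lambda>(r, c). \<Sum>i<k. l i * of_rat (Ms i $$ (r, c)))"

definition structural_rank :: "complex mat \<Rightarrow> nat" where
  "structural_rank M =
     (let (k, l, Ms) = (SOME (k, l, Ms). struct_decomp M k l Ms)
      in vec_space.rank (dim_row M)
           (mat (dim_row M) (dim_col M)
              (\<lambda>(r, c). \<Sum>i<k. rf_var i * rf_const (Ms i $$ (r, c))) :: ratfun mat))"

end

theory Submission
  imports Defs "Jordan_Normal_Form.DL_Rank_Submatrix"
begin

text \<open>
  Over any field the rank of a matrix is the largest size of a nonzero minor, so it suffices to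
  show that a minor of \<open>M\<close> vanishes exactly when the corresponding minor of the generic matrix
  \<open>G = \<Sum>\<^sub>i x\<^sub>i M\<^sub>i\<close> over \<open>\<rat>(x)\<close> does. Specialising \<open>x\<^sub>i\<close> to \<open>l\<^sub>i\<close> maps \<open>G\<close> to \<open>M\<close>, which gives one
  direction. For the other, write the entries of \<open>M\<close> as rational affine combinations of
  \<open>\<rat>\<close>-linearly independent \<open>b\<^sub>1, \<dots>, b\<^sub>r\<close> in \<open>Lset\<close>. By hypothesis the \<open>b\<^sub>t\<close> are algebraically
  independent, so a vanishing minor of \<open>M\<close> is the value at \<open>b\<close> of a polynomial that vanishes
  identically. A \<open>\<rat>\<close>-linear map \<open>\<Phi> : \<complex> \<rightarrow> \<rat>(x)\<close> with \<open>\<Phi> l\<^sub>i = x\<^sub>i\<close> and \<open>\<Phi> 1 \<noteq> 0\<close> sends \<open>M\<close> to \<open>G\<close>, and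
  \<open>G / \<Phi> 1\<close> is the same matrix of affine forms evaluated at \<open>\<Phi> b\<^sub>t / \<Phi> 1\<close>, so its minor vanishes too.
\<close>

section \<open>Rank via minors\<close>

lemma exists_nonzero_kernel_vec:
  fixes A :: "'a::field mat"
  assumes A: "A \<in> carrier_mat p q" and "p < q"
  shows "\<exists>v\<in>carrier_vec q. v \<noteq> 0\<^sub>v q \<and> A *\<^sub>v v = 0\<^sub>v p"
proof -
  \<comment> \<open>pad \<open>A\<close> with zero rows to a square matrix, which is singular\<close>
  define c where "c i = (if i < p then row A i else 0\<^sub>v q)" for i
  define X where "X = mat\<^sub>r q q (\<lambda>i. if i = q - 1 then 0\<^sub>v q else c i)"
  have c: "c \<in> {0..<q} \<rightarrow> carrier_vec q"
    using A by (auto simp: c_def)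
  have X: "X \<in> carrier_mat q q"
    by (simp add: X_def)
  have "det X = 0"
    unfolding X_def by (rule det_row_0[OF _ c]) (use \<open>p < q\<close> in simp)
  then obtain v where v: "v \<in> carrier_vec q" "v \<noteq> 0\<^sub>v q" "X *\<^sub>v v = 0\<^sub>v q"
    using det_0_iff_vec_prod_zero_field[OF X] by blast
  have "row A i \<bullet> v = 0" if "i < p" for i
  proof -
    have "i < q" "i \<noteq> q - 1"
      using that \<open>p < q\<close> by auto
    then have "row X i = row A i"
      using that A by (simp add: X_def c_def)
    moreover have "(X *\<^sub>v v) $ i = row X i \<bullet> v"
      using X \<open>i < q\<close> by simp
    ultimately show ?thesis
      using v(3) \<open>i < q\<close> by simp
  qed
  then have "A *\<^sub>v v = 0\<^sub>v p"
    using A by (intro eq_vecI) auto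
  with v show ?thesis
    by blast
qed

lemma scalar_prod_mat_mult_vec_columns:
  fixes x :: "'a::comm_semiring_0 vec"
  assumes x: "x \<in> carrier_vec r" and V: "\<And>a. a < s \<Longrightarrow> V a \<in> carrier_vec r"
    and c: "c \<in> carrier_vec s"
  shows "x \<bullet> (mat r s (\<lambda>(k, a). V a $ k) *\<^sub>v c) = (\<Sum>a<s. c $ a * (x \<bullet> V a))"
proof -
  have dim_V: "dim_vec (V a) = r" if "a < s" for a
    using V[OF that] by simp
  have "x \<bullet> (mat r s (\<lambda>(k, a). V a $ k) *\<^sub>v c) = (\<Sum>k<r. \<Sum>a<s. x $ k * (V a $ k * c $ a))"
    using x c by (simp add: scalar_prod_def lessThan_atLeast0 sum_distrib_left)
  also have "\<dots> = (\<Sum>a<s. \<Sum>k<r. c $ a * (x $ k * V a $ k))"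
    by (subst sum.swap) (simp add: mult_ac)
  also have "\<dots> = (\<Sum>a<s. c $ a * (x \<bullet> V a))"
    by (intro sum.cong) (auto simp: scalar_prod_def lessThan_atLeast0 sum_distrib_left dim_V)
  finally show ?thesis .
qed

definition rows_orth_trivial :: "'a::field mat \<Rightarrow> nat set \<Rightarrow> bool" where
  "rows_orth_trivial A K \<longleftrightarrow>
     (\<forall>v\<in>carrier_vec (dim_col A). (\<forall>i\<in>K. row A i \<bullet> v = 0) \<longrightarrow> v = 0\<^sub>v (dim_col A))"

lemma submatrix_rows_carrier:
  assumes "K \<subseteq> {..<dim_row A}"
  shows "submatrix A K UNIV \<in> carrier_mat (card K) (dim_col A)"
proof (rule carrier_matI)
  have "{i. i < dim_row A \<and> i \<in> K} = K"
    using assms by auto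
  then show "dim_row (submatrix A K UNIV) = card K"
    by (simp add: dim_submatrix)
  show "dim_col (submatrix A K UNIV) = dim_col A"
    by (simp add: dim_submatrix)
qed

lemma submatrix_rows_mult_vec_eq_0_iff:
  assumes K: "K \<subseteq> {..<dim_row A}"
  shows "submatrix A K UNIV *\<^sub>v v = 0\<^sub>v (card K) \<longleftrightarrow> (\<forall>i\<in>K. row A i \<bullet> v = 0)"
proof -
  have K_eq: "{i. i < dim_row A \<and> i \<in> K} = K"
    using K by auto
  have finite: "finite K"
    using K finite_subset by blast
  have entry: "(submatrix A K UNIV *\<^sub>v v) $ a = row A (pick K a) \<bullet> v" if "a < card K" for a
    using that submatrix_rows_carrier[OF K] row_submatrix_UNIV[of a A K] by (simp add: K_eq)
  have "(\<forall>a<card K. row A (pick K a) \<bullet> v = 0) \<longleftrightarrow> (\<forall>i\<in>K. row A i \<bullet> v = 0)"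
  proof
    assume rows: "\<forall>a<card K. row A (pick K a) \<bullet> v = 0"
    show "\<forall>i\<in>K. row A i \<bullet> v = 0"
    proof
      fix i assume "i \<in> K"
      then have "card {x\<in>K. x < i} < card K"
        using finite by (intro psubset_card_mono) auto
      with rows have "row A (pick K (card {x\<in>K. x < i})) \<bullet> v = 0"
        by blast
      then show "row A i \<bullet> v = 0"
        by (simp add: pick_card_in_set[OF \<open>i \<in> K\<close>])
    qed
  next
    assume "\<forall>i\<in>K. row A i \<bullet> v = 0"
    then show "\<forall>a<card K. row A (pick K a) \<bullet> v = 0"
      by (simp add: pick_in_set)
  qed
  moreover have "submatrix A K UNIV *\<^sub>v v = 0\<^sub>v (card K) \<longleftrightarrow> (\<forall>a<card K. row A (pick K a) \<bullet> v = 0)"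
    using submatrix_rows_carrier[OF K] entry by (auto simp: vec_eq_iff)
  ultimately show ?thesis
    by simp
qed

lemma rows_orth_trivial_card_ge:
  assumes K: "K \<subseteq> {..<dim_row A}" and triv: "rows_orth_trivial A K"
  shows "dim_col A \<le> card K"
proof (rule ccontr)
  assume "\<not> dim_col A \<le> card K"
  then obtain v where "v \<in> carrier_vec (dim_col A)" "v \<noteq> 0\<^sub>v (dim_col A)"
      "submatrix A K UNIV *\<^sub>v v = 0\<^sub>v (card K)"
    using exists_nonzero_kernel_vec[OF submatrix_rows_carrier[OF K]] by auto
  with triv show False
    unfolding rows_orth_trivial_def submatrix_rows_mult_vec_eq_0_iff[OF K] by blast
qed

lemma rows_orth_trivial_det_nonzero:
  assumes K: "K \<subseteq> {..<dim_row A}" and card: "card K = dim_col A" and triv: "rows_orth_trivial A K"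
  shows "det (submatrix A K UNIV) \<noteq> 0"
proof
  assume "det (submatrix A K UNIV) = 0"
  then obtain v where "v \<in> carrier_vec (dim_col A)" "v \<noteq> 0\<^sub>v (dim_col A)"
      "submatrix A K UNIV *\<^sub>v v = 0\<^sub>v (card K)"
    using det_0_iff_vec_prod_zero_field[OF submatrix_rows_carrier[OF K, unfolded card]] card
    by auto
  with triv show False
    unfolding rows_orth_trivial_def submatrix_rows_mult_vec_eq_0_iff[OF K] by blast
qed

text \<open>
  If no row could be dropped, each \<open>i \<in> K\<close> would have a nonzero \<open>V i\<close> orthogonal to exactly the
  other rows of \<open>K\<close>. These are more than \<open>dim_col A\<close> vectors, hence linearly dependent, and
  pairing a dependence relation with row \<open>i\<close> isolates its \<open>i\<close>-th coefficient.
\<close>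

lemma rows_orth_trivial_remove_row:
  assumes K: "K \<subseteq> {..<dim_row A}" and card: "dim_col A < card K" and triv: "rows_orth_trivial A K"
  shows "\<exists>i\<in>K. rows_orth_trivial A (K - {i})"
proof (rule ccontr)
  let ?r = "dim_col A"
  assume "\<not> (\<exists>i\<in>K. rows_orth_trivial A (K - {i}))"
  then have "\<forall>i\<in>K. \<exists>v. v \<in> carrier_vec ?r \<and> v \<noteq> 0\<^sub>v ?r \<and> (\<forall>j\<in>K - {i}. row A j \<bullet> v = 0)"
    unfolding rows_orth_trivial_def by blast
  then obtain V where V: "\<forall>i\<in>K. V i \<in> carrier_vec ?r \<and> V i \<noteq> 0\<^sub>v ?r
      \<and> (\<forall>j\<in>K - {i}. row A j \<bullet> V i = 0)"
    by (rule bchoice[elim_format]) blast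
  have V_diag: "row A i \<bullet> V i \<noteq> 0" if "i \<in> K" for i
    using triv V that unfolding rows_orth_trivial_def by (metis Diff_iff singletonD)
  have pick_K: "pick K a \<in> K" if "a < card K" for a
    using that by (simp add: pick_in_set)
  have pick_inj: "pick K a \<noteq> pick K b" if "a < card K" "b < card K" "a \<noteq> b" for a b
    using that pick_mono[of b K a] pick_mono[of a K b] by (cases "a < b") auto
  let ?W = "mat ?r (card K) (\<lambda>(k, a). V (pick K a) $ k)"
  obtain c where c: "c \<in> carrier_vec (card K)" "c \<noteq> 0\<^sub>v (card K)" "?W *\<^sub>v c = 0\<^sub>v ?r"
    using exists_nonzero_kernel_vec[of ?W ?r "card K"] card by auto
  have "c $ a = 0" if a: "a < card K" for a
  proof -
    let ?i = "pick K a"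
    have "0 = row A ?i \<bullet> (?W *\<^sub>v c)"
      using c(3) by simp
    also have "\<dots> = (\<Sum>b<card K. c $ b * (row A ?i \<bullet> V (pick K b)))"
      using V pick_K c(1) by (intro scalar_prod_mat_mult_vec_columns) auto
    also have "\<dots> = c $ a * (row A ?i \<bullet> V ?i)"
    proof -
      have "row A ?i \<bullet> V (pick K b) = 0" if "b \<in> {..<card K} - {a}" for b
        using that a V pick_K pick_inj[of a b] by auto
      then have "(\<Sum>b\<in>{..<card K} - {a}. c $ b * (row A ?i \<bullet> V (pick K b))) = 0"
        by (intro sum.neutral) simp
      with a show ?thesis
        by (simp add: sum.remove[of "{..<card K}" a])
    qed
    finally have "c $ a * (row A ?i \<bullet> V ?i) = 0" ..
    with V_diag pick_K[OF a] show ?thesis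
      by simp
  qed
  then have "c = 0\<^sub>v (card K)"
    using c(1) by (intro eq_vecI) auto
  with c(2) show False ..
qed

lemma exists_nonsingular_row_submatrix:
  assumes "K \<subseteq> {..<dim_row A}" and "rows_orth_trivial A K"
  shows "\<exists>I\<subseteq>K. card I = dim_col A \<and> det (submatrix A I UNIV) \<noteq> 0"
  using assms
proof (induction "card K" arbitrary: K rule: less_induct)
  case less
  consider "card K = dim_col A" | "dim_col A < card K"
    using rows_orth_trivial_card_ge[OF less.prems] by linarith
  then show ?case
  proof cases
    case 1
    with less.prems show ?thesis
      using rows_orth_trivial_det_nonzero by blast
  next
    case 2
    with less.prems obtain i where i: "i \<in> K" "rows_orth_trivial A (K - {i})"
      using rows_orth_trivial_remove_row by blast
    have "finite K"
      using less.prems(1) finite_subset by blast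
    then have "card (K - {i}) < card K"
      using i(1) by (rule card_Diff1_less)
    with less.hyps[of "K - {i}"] less.prems(1) i(2) show ?thesis
      by blast
  qed
qed

lemma col_submatrix_UNIV:
  assumes "j < card {j. j < dim_col A \<and> j \<in> J}"
  shows "col (submatrix A UNIV J) j = col A (pick J j)"
proof (rule eq_vecI)
  fix i assume "i < dim_vec (col A (pick J j))"
  then show "col (submatrix A UNIV J) j $ i = col A (pick J j) $ i"
    using assms submatrix_index[of i A UNIV j J] pick_le[OF assms]
    by (simp add: dim_submatrix pick_UNIV)
qed (simp add: dim_submatrix)

lemma (in vec_space) rows_orth_trivial_if_lin_indpt_cols:
  assumes B: "B \<in> carrier_mat n nc" and distinct: "distinct (cols B)"
    and indpt: "lin_indpt (set (cols B))"
  shows "rows_orth_trivial B {..<n}"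
  unfolding rows_orth_trivial_def
proof (intro ballI impI)
  fix v assume v: "v \<in> carrier_vec (dim_col B)" and orth: "\<forall>i\<in>{..<n}. row B i \<bullet> v = 0"
  have "B *\<^sub>v v = 0\<^sub>v n"
    using B orth by (intro eq_vecI) auto
  with B v distinct indpt show "v = 0\<^sub>v (dim_col B)"
    using lin_depI[OF B] by auto
qed

lemma exists_column_submatrix:
  assumes A: "A \<in> carrier_mat m n" and S: "S \<subseteq> set (cols A)"
  obtains J where "J \<subseteq> {..<n}" "card J = card S"
    "distinct (cols (submatrix A UNIV J))" "set (cols (submatrix A UNIV J)) \<subseteq> S"
proof -
  have "S \<subseteq> col A ` {..<n}"
    using S A by (auto simp: cols_def)
  then have "\<forall>s\<in>S. \<exists>j. j < n \<and> col A j = s"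
    by blast
  then obtain idx where idx: "\<forall>s\<in>S. idx s < n \<and> col A (idx s) = s"
    by (rule bchoice[elim_format]) blast
  define J where "J = idx ` S"
  have J_n: "J \<subseteq> {..<n}"
    using idx by (auto simp: J_def)
  have "inj_on idx S"
    by (rule inj_on_inverseI[of _ "col A"]) (use idx in simp)
  then have card_J: "card J = card S"
    by (simp add: J_def card_image)
  have inj_col: "inj_on (col A) J" and col_J: "col A ` J \<subseteq> S"
    using idx by (auto simp: J_def inj_on_def)
  define B where "B = submatrix A UNIV J"
  have J_eq: "{j. j < dim_col A \<and> j \<in> J} = J"
    using A J_n by auto
  have dim_B: "dim_col B = card J"
    using J_eq by (simp add: B_def dim_submatrix)
  have col_B: "col B a = col A (pick J a)" if "a < card J" for a
    unfolding B_def using that J_eq by (intro col_submatrix_UNIV) simp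
  have pick_J: "pick J a \<in> J" if "a < card J" for a
    using that by (simp add: pick_in_set)
  have "inj_on (\<lambda>a. col A (pick J a)) {..<card J}"
  proof (rule inj_onI, rule ccontr)
    fix a b assume "a \<in> {..<card J}" "b \<in> {..<card J}" "col A (pick J a) = col A (pick J b)" "a \<noteq> b"
    moreover from this have "pick J a \<noteq> pick J b"
      using pick_mono[of b J a] pick_mono[of a J b] by (cases "a < b") auto
    ultimately show False
      using inj_col pick_J by (auto dest: inj_onD)
  qed
  then have "distinct (cols B)"
    by (auto simp: distinct_conv_nth dim_B col_B inj_on_def)
  moreover have "set (cols B) \<subseteq> S"
    using col_J pick_J by (auto simp: cols_def dim_B col_B)
  ultimately show ?thesis
    using that J_n card_J by (simp add: B_def)
qed

lemma exists_minor_of_size_rank: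
  fixes A :: "'a::field mat"
  assumes A: "A \<in> carrier_mat m n"
  shows "\<exists>I J. J \<subseteq> {..<n} \<and> card J = vec_space.rank m A \<and> det (submatrix A I J) \<noteq> 0"
proof -
  interpret vec_space "TYPE('a)" m .
  obtain S where S: "maximal S (\<lambda>T. T \<subseteq> set (cols A) \<and> lin_indpt T)"
    using maximal_exists[of "\<lambda>T. T \<subseteq> set (cols A) \<and> lin_indpt T" "card (set (cols A))" "{}"]
    by (meson List.finite_set card_mono empty_iff empty_subsetI finite_lin_indpt2 rev_finite_subset)
  then have rank: "rank A = card S" and S_cols: "S \<subseteq> set (cols A)" and S_indpt: "lin_indpt S"
    using rank_card_indpt[OF A] unfolding maximal_def by auto
  obtain J where J: "J \<subseteq> {..<n}" "card J = card S"
    and distinct: "distinct (cols (submatrix A UNIV J))" and cols: "set (cols (submatrix A UNIV J)) \<subseteq> S"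
    using exists_column_submatrix[OF A S_cols] by blast
  define B where "B = submatrix A UNIV J"
  have "{j. j < dim_col A \<and> j \<in> J} = J"
    using A J(1) by auto
  then have B: "B \<in> carrier_mat m (card J)"
    using A by (intro carrier_matI) (simp_all add: B_def dim_submatrix)
  have "lin_indpt (set (cols B))"
    using subset_li_is_li[OF S_indpt] cols by (simp add: B_def)
  then have "rows_orth_trivial B {..<m}"
    using rows_orth_trivial_if_lin_indpt_cols[OF B] distinct by (simp add: B_def)
  then obtain I where I: "card I = card J" "det (submatrix B I UNIV) \<noteq> 0"
    using exists_nonsingular_row_submatrix[of "{..<m}" B] B by auto
  have "submatrix A I J = submatrix B I UNIV"
    unfolding B_def by (rule submatrix_split)
  with I J rank show ?thesis
    by (intro exI[of _ I] exI[of _ J]) simp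
qed

lemma rank_le_if_nonzero_minors_preserved:
  fixes A :: "'a::field mat" and B :: "'b::field mat"
  assumes A: "A \<in> carrier_mat m n" and B: "B \<in> carrier_mat m n"
    and minors: "\<And>I J. det (submatrix A I J) \<noteq> 0 \<Longrightarrow> det (submatrix B I J) \<noteq> 0"
  shows "vec_space.rank m A \<le> vec_space.rank m B"
proof -
  obtain I J where J: "J \<subseteq> {..<n}" "card J = vec_space.rank m A" "det (submatrix A I J) \<noteq> 0"
    using exists_minor_of_size_rank[OF A] by blast
  then have "card {j. j < n \<and> j \<in> J} \<le> vec_space.rank m B"
    using minors by (intro vec_space.rank_gt_minor[OF B]) blast
  moreover have "{j. j < n \<and> j \<in> J} = J"
    using J(1) by auto
  ultimately show ?thesis
    using J(2) by simp
qed

section \<open>Rational polynomials and their evaluation\<close>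

type_synonym qpoly = "(nat \<Rightarrow>\<^sub>0 nat) \<Rightarrow>\<^sub>0 rat"

definition qvar :: "nat \<Rightarrow> qpoly" where
  "qvar i = Poly_Mapping.single (Poly_Mapping.single i 1) 1"

definition qconst :: "rat \<Rightarrow> qpoly" where
  "qconst c = Poly_Mapping.single 0 c"

definition monom_eval :: "(nat \<Rightarrow> 'b::comm_semiring_1) \<Rightarrow> (nat \<Rightarrow>\<^sub>0 nat) \<Rightarrow> 'b" where
  "monom_eval v \<alpha> = (\<Prod>i\<in>Poly_Mapping.keys \<alpha>. v i ^ Poly_Mapping.lookup \<alpha> i)"

definition qpoly_eval :: "(rat \<Rightarrow> 'b::comm_ring_1) \<Rightarrow> (nat \<Rightarrow> 'b) \<Rightarrow> qpoly \<Rightarrow> 'b" where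
  "qpoly_eval h v p = (\<Sum>\<alpha>\<in>Poly_Mapping.keys p. h (Poly_Mapping.lookup p \<alpha>) * monom_eval v \<alpha>)"

lemma qpoly_eval_0 [simp]: "qpoly_eval h v 0 = 0"
  by (simp add: qpoly_eval_def)

lemma mpoly_eval_eq_qpoly_eval: "mpoly_eval p y = qpoly_eval of_rat y p"
  unfolding mpoly_eval_def qpoly_eval_def monom_eval_def ..

lemma monom_eval_superset:
  assumes "finite K" "Poly_Mapping.keys \<alpha> \<subseteq> K"
  shows "monom_eval v \<alpha> = (\<Prod>i\<in>K. v i ^ Poly_Mapping.lookup \<alpha> i)"
  unfolding monom_eval_def
  by (rule prod.mono_neutral_left) (use assms in \<open>auto simp: in_keys_iff\<close>)

lemma monom_eval_add: "monom_eval v (\<alpha> + \<beta>) = monom_eval v \<alpha> * monom_eval v \<beta>"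
proof -
  let ?K = "Poly_Mapping.keys \<alpha> \<union> Poly_Mapping.keys \<beta>"
  have "monom_eval v (\<alpha> + \<beta>) = (\<Prod>i\<in>?K. v i ^ Poly_Mapping.lookup (\<alpha> + \<beta>) i)"
    by (rule monom_eval_superset) (simp_all add: keys_add)
  also have "\<dots> = monom_eval v \<alpha> * monom_eval v \<beta>"
    by (simp add: monom_eval_superset[of ?K] lookup_add power_add prod.distrib)
  finally show ?thesis .
qed

lemma monom_eval_single: "monom_eval v (Poly_Mapping.single i 1) = v i"
  unfolding monom_eval_def by simp

lemma sum_single_lookup: "(\<Sum>\<alpha>\<in>Poly_Mapping.keys p. Poly_Mapping.single \<alpha> (Poly_Mapping.lookup p \<alpha>)) = p"
proof (rule poly_mapping_eqI)
  fix \<beta>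
  have "(\<Sum>\<alpha>\<in>Poly_Mapping.keys p. Poly_Mapping.lookup (Poly_Mapping.single \<alpha> (Poly_Mapping.lookup p \<alpha>)) \<beta>)
      = (\<Sum>\<alpha>\<in>Poly_Mapping.keys p. if \<alpha> = \<beta> then Poly_Mapping.lookup p \<alpha> else 0)"
    by (rule sum.cong) (auto simp: lookup_single)
  then show "Poly_Mapping.lookup (\<Sum>\<alpha>\<in>Poly_Mapping.keys p. Poly_Mapping.single \<alpha> (Poly_Mapping.lookup p \<alpha>)) \<beta>
      = Poly_Mapping.lookup p \<beta>"
    by (simp add: lookup_sum in_keys_iff)
qed

context
  fixes h :: "rat \<Rightarrow> 'b::comm_ring_1"
  assumes h: "comm_ring_hom h"
begin

interpretation h: comm_ring_hom h by (rule h)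

lemma qpoly_eval_superset:
  assumes "finite K" "Poly_Mapping.keys p \<subseteq> K"
  shows "qpoly_eval h v p = (\<Sum>\<alpha>\<in>K. h (Poly_Mapping.lookup p \<alpha>) * monom_eval v \<alpha>)"
  unfolding qpoly_eval_def
  by (rule sum.mono_neutral_left) (use assms in \<open>auto simp: in_keys_iff\<close>)

lemma qpoly_eval_add: "qpoly_eval h v (p + q) = qpoly_eval h v p + qpoly_eval h v q"
proof -
  let ?K = "Poly_Mapping.keys p \<union> Poly_Mapping.keys q"
  have "qpoly_eval h v (p + q) = (\<Sum>\<alpha>\<in>?K. h (Poly_Mapping.lookup (p + q) \<alpha>) * monom_eval v \<alpha>)"
    by (rule qpoly_eval_superset) (simp_all add: keys_add)
  also have "\<dots> = (\<Sum>\<alpha>\<in>?K. h (Poly_Mapping.lookup p \<alpha>) * monom_eval v \<alpha>)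
      + (\<Sum>\<alpha>\<in>?K. h (Poly_Mapping.lookup q \<alpha>) * monom_eval v \<alpha>)"
    by (simp only: lookup_add h.hom_add distrib_right sum.distrib)
  also have "\<dots> = qpoly_eval h v p + qpoly_eval h v q"
    by (simp add: qpoly_eval_superset[of ?K p] qpoly_eval_superset[of ?K q])
  finally show ?thesis .
qed

lemma qpoly_eval_single: "qpoly_eval h v (Poly_Mapping.single \<alpha> c) = h c * monom_eval v \<alpha>"
  by (cases "c = 0") (simp_all add: qpoly_eval_def)

lemma qpoly_eval_mult: "qpoly_eval h v (p * q) = qpoly_eval h v p * qpoly_eval h v q"
proof -
  interpret ev: additive "qpoly_eval h v" by standard (rule qpoly_eval_add)
  let ?P = "Poly_Mapping.keys p" and ?Q = "Poly_Mapping.keys q"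
  let ?a = "Poly_Mapping.lookup p" and ?b = "Poly_Mapping.lookup q"
  have "p * q = (\<Sum>\<alpha>\<in>?P. Poly_Mapping.single \<alpha> (?a \<alpha>)) * (\<Sum>\<beta>\<in>?Q. Poly_Mapping.single \<beta> (?b \<beta>))"
    by (simp only: sum_single_lookup)
  also have "\<dots> = (\<Sum>\<alpha>\<in>?P. \<Sum>\<beta>\<in>?Q. Poly_Mapping.single (\<alpha> + \<beta>) (?a \<alpha> * ?b \<beta>))"
    by (simp add: sum_product mult_single)
  finally have "qpoly_eval h v (p * q)
      = (\<Sum>\<alpha>\<in>?P. \<Sum>\<beta>\<in>?Q. (h (?a \<alpha>) * monom_eval v \<alpha>) * (h (?b \<beta>) * monom_eval v \<beta>))"
    by (simp add: ev.sum qpoly_eval_single monom_eval_add h.hom_mult mult_ac)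
  then show ?thesis
    by (simp add: qpoly_eval_def sum_product)
qed

lemma comm_ring_hom_qpoly_eval: "comm_ring_hom (qpoly_eval h v)"
  by unfold_locales
    (simp_all add: qpoly_eval_add qpoly_eval_mult qpoly_eval_single monom_eval_def flip: single_one)

lemma qpoly_eval_qvar [simp]: "qpoly_eval h v (qvar i) = v i"
  unfolding qvar_def qpoly_eval_single monom_eval_single by simp

lemma qpoly_eval_qconst [simp]: "qpoly_eval h v (qconst c) = h c"
  by (simp add: qconst_def qpoly_eval_single monom_eval_def)

end

definition ratfun_of :: "qpoly \<Rightarrow> ratfun" where
  "ratfun_of p = Fract p 1"

lemma comm_ring_hom_ratfun_of: "comm_ring_hom ratfun_of"
  by unfold_locales (simp_all add: ratfun_of_def Zero_fract_def One_fract_def)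

lemma ratfun_of_eq_0_iff [simp]: "ratfun_of p = 0 \<longleftrightarrow> p = 0"
  by (simp add: ratfun_of_def Zero_fract_def eq_fract)

lemma rf_var_eq: "rf_var i = ratfun_of (qvar i)"
  by (simp add: rf_var_def ratfun_of_def qvar_def)

lemma rf_const_eq: "rf_const c = ratfun_of (qconst c)"
  by (simp add: rf_const_def ratfun_of_def qconst_def)

lemma qconst_mult_qvar: "qconst c * qvar i = Poly_Mapping.single (Poly_Mapping.single i 1) c"
  by (simp add: qconst_def qvar_def mult_single)

lemma comm_ring_hom_of_rat: "comm_ring_hom (of_rat :: rat \<Rightarrow> 'a::field_char_0)"
  by unfold_locales (simp_all add: of_rat_add of_rat_mult)

lemma comm_ring_hom_qconst: "comm_ring_hom qconst"
  by unfold_locales (simp_all add: qconst_def single_add mult_single)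

lemma comm_ring_hom_rf_const: "comm_ring_hom rf_const"
proof -
  interpret ratfun_of: comm_ring_hom ratfun_of by (rule comm_ring_hom_ratfun_of)
  interpret qconst: comm_ring_hom qconst by (rule comm_ring_hom_qconst)
  show ?thesis
    by unfold_locales (simp_all add: rf_const_eq qconst.hom_add qconst.hom_mult
        ratfun_of.hom_add ratfun_of.hom_mult)
qed

lemma rf_vars_independent:
  assumes "(\<Sum>i<k. rf_const (u i) * rf_var i) = 0" and "j < k"
  shows "u j = 0"
proof -
  interpret ratfun_of: comm_ring_hom ratfun_of by (rule comm_ring_hom_ratfun_of)
  let ?p = "\<Sum>i<k. qconst (u i) * qvar i"
  have single_eq_iff: "Poly_Mapping.single i (1::nat) = Poly_Mapping.single j 1 \<longleftrightarrow> i = j" for i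
    by (metis lookup_single_eq lookup_single_not_eq one_neq_zero)
  have "ratfun_of ?p = 0"
    using assms(1) by (simp add: rf_const_eq rf_var_eq ratfun_of.hom_sum ratfun_of.hom_mult)
  then have "Poly_Mapping.lookup ?p (Poly_Mapping.single j 1) = 0" by simp
  moreover have "Poly_Mapping.lookup ?p (Poly_Mapping.single j 1) = u j"
    using \<open>j < k\<close> single_eq_iff by (simp add: qconst_mult_qvar lookup_sum lookup_single when_def)
  ultimately show ?thesis by simp
qed

definition vars_below :: "nat \<Rightarrow> qpoly \<Rightarrow> bool" where
  "vars_below r p \<longleftrightarrow> (\<forall>\<alpha>\<in>Poly_Mapping.keys p. Poly_Mapping.keys \<alpha> \<subseteq> {..<r})"

lemma alg_indep_iff_vars_below:
  "alg_indep r y \<longleftrightarrow> (\<forall>p. vars_below r p \<longrightarrow> mpoly_eval p y = 0 \<longrightarrow> p = 0)"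
  unfolding alg_indep_def vars_below_def ..

lemma vars_below_add: "vars_below r p \<Longrightarrow> vars_below r q \<Longrightarrow> vars_below r (p + q)"
  unfolding vars_below_def using keys_add[of p q] by blast

lemma vars_below_mult:
  assumes "vars_below r p" "vars_below r q"
  shows "vars_below r (p * q)"
  unfolding vars_below_def
proof
  fix \<gamma> assume "\<gamma> \<in> Poly_Mapping.keys (p * q)"
  then obtain \<alpha> \<beta> where "\<gamma> = \<alpha> + \<beta>" "\<alpha> \<in> Poly_Mapping.keys p" "\<beta> \<in> Poly_Mapping.keys q"
    using keys_mult[of p q] by blast
  with assms keys_add[of \<alpha> \<beta>] show "Poly_Mapping.keys \<gamma> \<subseteq> {..<r}"
    unfolding vars_below_def by blast
qed

lemma vars_below_single_0: "vars_below r (Poly_Mapping.single 0 c)"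
  unfolding vars_below_def by simp

lemma vars_below_0: "vars_below r 0"
  using vars_below_single_0[of r 0] by simp

lemma vars_below_1: "vars_below r 1"
  using vars_below_single_0[of r 1] by simp

lemma vars_below_sum: "(\<And>a. a \<in> A \<Longrightarrow> vars_below r (f a)) \<Longrightarrow> vars_below r (sum f A)"
  by (induction A rule: infinite_finite_induct) (simp_all add: vars_below_0 vars_below_add)

lemma vars_below_prod: "(\<And>a. a \<in> A \<Longrightarrow> vars_below r (f a)) \<Longrightarrow> vars_below r (prod f A)"
  by (induction A rule: infinite_finite_induct) (simp_all add: vars_below_1 vars_below_mult)

lemma vars_below_of_int: "vars_below r (of_int k)"
  using vars_below_single_0[of r "of_int k"] by simp

lemma vars_below_qconst: "vars_below r (qconst c)"
  unfolding qconst_def by (rule vars_below_single_0)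

lemma vars_below_qvar: "i < r \<Longrightarrow> vars_below r (qvar i)"
  unfolding vars_below_def qvar_def by simp

lemma vars_below_det:
  assumes "\<And>i j. i < dim_row A \<Longrightarrow> j < dim_col A \<Longrightarrow> vars_below r (A $$ (i, j))"
  shows "vars_below r (det A)"
proof (cases "dim_row A = dim_col A")
  case True
  show ?thesis
    unfolding det_def using True
  proof (simp, intro vars_below_sum vars_below_mult vars_below_of_int vars_below_prod)
    fix \<pi> i assume "\<pi> \<in> {\<pi>. \<pi> permutes {0..<dim_col A}}" "i \<in> {0..<dim_col A}"
    then show "vars_below r (A $$ (i, \<pi> i))"
      using assms True permutes_in_image[of \<pi> "{0..<dim_col A}" i] by simp
  qed
qed (simp add: det_def vars_below_def)

lemma alg_indep_0: "alg_indep 0 y"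
  unfolding alg_indep_iff_vars_below
proof (intro allI impI)
  fix p assume vars: "vars_below 0 p" and root: "mpoly_eval p y = 0"
  have keys: "Poly_Mapping.keys p \<subseteq> {0}"
    using vars by (auto simp: vars_below_def)
  have "of_rat (Poly_Mapping.lookup p 0) = mpoly_eval p y"
    using keys by (simp add: mpoly_eval_eq_qpoly_eval monom_eval_def
        qpoly_eval_superset[OF comm_ring_hom_of_rat, of "{0}" p y])
  with root have "0 \<notin> Poly_Mapping.keys p"
    by (simp add: in_keys_iff)
  with keys have "Poly_Mapping.keys p = {}"
    by blast
  then show "p = 0"
    by simp
qed

lemma submatrix_map_mat: "submatrix (map_mat f A) I J = map_mat f (submatrix A I J)"
  by (rule eq_matI) (auto simp: submatrix_def dim_submatrix pick_le)

lemma det_submatrix_map_mat: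
  assumes "comm_ring_hom f"
  shows "det (submatrix (map_mat f A) I J) = f (det (submatrix A I J))"
  by (simp add: submatrix_map_mat comm_ring_hom.hom_det[OF assms])

lemma det_submatrix_specialize:
  assumes "comm_ring_hom h" and "det (submatrix (map_mat ratfun_of N) I J) = 0"
  shows "det (submatrix (map_mat (qpoly_eval h v) N) I J) = 0"
  using assms
  by (simp add: det_submatrix_map_mat comm_ring_hom_ratfun_of comm_ring_hom_qpoly_eval)

lemma det_submatrix_alg_indep_transfer:
  assumes alg: "alg_indep r b"
    and vars: "\<And>i j. i < dim_row N \<Longrightarrow> j < dim_col N \<Longrightarrow> vars_below r (N $$ (i, j))"
    and h: "comm_ring_hom h"
    and det_b: "det (submatrix (map_mat (qpoly_eval of_rat b) N) I J) = 0"
  shows "det (submatrix (map_mat (qpoly_eval h w) N) I J) = 0"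
proof -
  let ?D = "det (submatrix N I J)"
  have "vars_below r ?D"
    by (rule vars_below_det) (auto simp: submatrix_def dim_submatrix intro!: vars pick_le)
  moreover have "mpoly_eval ?D b = 0"
    using det_b by (simp add: mpoly_eval_eq_qpoly_eval det_submatrix_map_mat
        comm_ring_hom_qpoly_eval[OF comm_ring_hom_of_rat])
  ultimately have "?D = 0"
    using alg by (simp add: alg_indep_iff_vars_below)
  then show ?thesis
    by (simp add: det_submatrix_map_mat comm_ring_hom_qpoly_eval[OF h])
qed

section \<open>Linear algebra over the rationals\<close>

lemma (in Modules.module) in_span_image_iff:
  assumes "finite A"
  shows "x \<in> span (f ` A) \<longleftrightarrow> (\<exists>c. x = (\<Sum>a\<in>A. c a *s f a))"
proof
  assume "x \<in> span (f ` A)"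
  then show "\<exists>c. x = (\<Sum>a\<in>A. c a *s f a)"
  proof (induction rule: span_induct_alt)
    case base
    show ?case by (rule exI[of _ "\<lambda>_. 0"]) simp
  next
    case (step k v y)
    then obtain a0 c where "a0 \<in> A" "v = f a0" "y = (\<Sum>a\<in>A. c a *s f a)" by blast
    then have sum: "k *s v + y = (\<Sum>a\<in>A. (c a + (if a = a0 then k else 0)) *s f a)"
      using assms by (simp add: scale_left_distrib sum.distrib if_distrib[of "\<lambda>r. r *s f _"]
          sum.delta add.commute cong: if_cong)
    show ?case by (rule exI) (rule sum)
  qed
next
  assume "\<exists>c. x = (\<Sum>a\<in>A. c a *s f a)"
  then obtain c where x: "x = (\<Sum>a\<in>A. c a *s f a)" ..
  show "x \<in> span (f ` A)"
    unfolding x by (intro span_sum span_scale span_base imageI)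
qed

lemma (in Modules.module) span_finite_subset:
  assumes "finite E" and "E \<subseteq> span S"
  obtains F where "finite F" "F \<subseteq> S" "E \<subseteq> span F"
proof -
  have "\<exists>F. finite F \<and> F \<subseteq> S \<and> x \<in> span F" if "x \<in> span S" for x
  proof -
    from that obtain F r where F: "finite F" "F \<subseteq> S" and x: "x = (\<Sum>a\<in>F. r a *s a)"
      unfolding span_explicit by blast
    have "x \<in> span F"
      unfolding x by (intro span_sum span_scale span_base)
    with F show ?thesis
      by blast
  qed
  with assms(2) have "\<forall>x\<in>E. \<exists>F. finite F \<and> F \<subseteq> S \<and> x \<in> span F"
    by blast
  then obtain G where G: "\<forall>x\<in>E. finite (G x) \<and> G x \<subseteq> S \<and> x \<in> span (G x)"
    by (rule bchoice[elim_format]) blast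
  show ?thesis
  proof
    show "finite (\<Union>x\<in>E. G x)" "(\<Union>x\<in>E. G x) \<subseteq> S"
      using assms(1) G by auto
    show "E \<subseteq> span (\<Union>x\<in>E. G x)"
      using G span_mono[of "G _" "\<Union>x\<in>E. G x"] by blast
  qed
qed

lemma (in vector_space) exists_finite_independent_span_insert:
  assumes "finite E" and "E \<subseteq> span (insert a S)"
  obtains B where "finite B" "B \<subseteq> S" "independent B" "E \<subseteq> span (insert a B)"
proof -
  obtain F where F: "finite F" "F \<subseteq> insert a S" "E \<subseteq> span F"
    using span_finite_subset[OF assms] by blast
  obtain B where B: "B \<subseteq> F \<inter> S" "independent B" "F \<inter> S \<subseteq> span B"
    using maximal_independent_subset by blast
  have "F \<subseteq> span (insert a B)"
  proof
    fix x assume "x \<in> F"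
    with F(2) consider "x = a" | "x \<in> F \<inter> S"
      by blast
    then show "x \<in> span (insert a B)"
    proof cases
      case 1
      then show ?thesis by (simp add: span_base)
    next
      case 2
      with B(3) have "x \<in> span B" by blast
      then show ?thesis
        using span_mono[of B "insert a B"] by blast
    qed
  qed
  then have "span F \<subseteq> span (insert a B)"
    by (rule span_minimal[OF _ subspace_span])
  moreover have "finite B"
    using B(1) F(1) by (meson finite_Int finite_subset)
  ultimately show ?thesis
    using that B F(3) by blast
qed

lemma (in vector_space) independent_family_iff:
  assumes "finite A"
  shows "(\<forall>c. (\<Sum>a\<in>A. c a *s f a) = 0 \<longrightarrow> (\<forall>a\<in>A. c a = 0))
    \<longleftrightarrow> inj_on f A \<and> independent (f ` A)" (is "?family \<longleftrightarrow> _")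
proof (intro iffI conjI)
  assume family: ?family
  show inj: "inj_on f A"
  proof (rule inj_onI, rule ccontr)
    fix a a' assume "a \<in> A" "a' \<in> A" "f a = f a'" "a \<noteq> a'"
    let ?c = "\<lambda>x. (if x = a then 1 else 0) - (if x = a' then 1 else 0) :: 'a"
    have "(\<Sum>x\<in>A. ?c x *s f x) = f a - f a'"
      using \<open>a \<in> A\<close> \<open>a' \<in> A\<close> assms
      by (simp add: scale_left_diff_distrib sum_subtractf if_distrib[of "\<lambda>r. r *s f _"]
          cong: if_cong)
    with \<open>f a = f a'\<close> have "(\<Sum>x\<in>A. ?c x *s f x) = 0"
      by simp
    from family[rule_format, OF this \<open>a \<in> A\<close>] have "?c a = 0" .
    with \<open>a \<noteq> a'\<close> show False
      by simp
  qed
  have "d v = 0" if sum: "(\<Sum>v\<in>f ` A. d v *s v) = 0" and "v \<in> f ` A" for d v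
  proof -
    from \<open>v \<in> f ` A\<close> obtain a where "a \<in> A" "v = f a" by blast
    from sum inj have "(\<Sum>a\<in>A. d (f a) *s f a) = 0"
      by (simp add: sum.reindex)
    from family[rule_format, OF this \<open>a \<in> A\<close>] \<open>v = f a\<close> show "d v = 0"
      by simp
  qed
  then show "independent (f ` A)"
    by (auto simp: dependent_finite[OF finite_imageI[OF assms]])
next
  assume "inj_on f A \<and> independent (f ` A)"
  then have inj: "inj_on f A" and indep: "independent (f ` A)" by auto
  show ?family
  proof (intro allI impI ballI)
    fix c a assume sum: "(\<Sum>a\<in>A. c a *s f a) = 0" and "a \<in> A"
    let ?d = "\<lambda>v. c (the_inv_into A f v)"
    have "(\<Sum>v\<in>f ` A. ?d v *s v) = 0"
      using sum inj by (simp add: sum.reindex the_inv_into_f_f)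
    with indep \<open>a \<in> A\<close> have "?d (f a) = 0"
      by (auto simp: dependent_finite[OF finite_imageI[OF assms]])
    with inj \<open>a \<in> A\<close> show "c a = 0"
      by (simp add: the_inv_into_f_f)
  qed
qed

interpretation Q_complex: vector_space "\<lambda>(c::rat) (z::complex). of_rat c * z"
  by unfold_locales (simp_all add: algebra_simps of_rat_add of_rat_mult)

interpretation Q_ratfun: vector_space "\<lambda>c (f::ratfun). rf_const c * f"
proof -
  interpret rf_const: comm_ring_hom rf_const by (rule comm_ring_hom_rf_const)
  show "vector_space (\<lambda>c (f::ratfun). rf_const c * f)"
    by unfold_locales (simp_all add: algebra_simps rf_const.hom_add rf_const.hom_mult)
qed

interpretation Q_pair: vector_space_pair "\<lambda>(c::rat) (z::complex). of_rat c * z" "\<lambda>c (f::ratfun). rf_const c * f"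
  ..

abbreviation q_linear :: "(complex \<Rightarrow> ratfun) \<Rightarrow> bool" where
  "q_linear \<equiv> Vector_Spaces.linear (\<lambda>c z. of_rat c * z) (\<lambda>c f. rf_const c * f)"

lemma qspan_eq_span: "qspan A = Q_complex.span A"
  unfolding qspan_def Q_complex.span_explicit by auto

lemma q_indep_iff_independent:
  "q_indep k l \<longleftrightarrow> inj_on l {..<k} \<and> Q_complex.independent (l ` {..<k})"
  unfolding q_indep_def Q_complex.independent_family_iff[OF finite_lessThan, symmetric] by auto

lemma in_span_insert_1_iff:
  fixes b :: "nat \<Rightarrow> complex"
  shows "z \<in> Q_complex.span (insert 1 (b ` {..<r}))
    \<longleftrightarrow> (\<exists>c c0. z = (\<Sum>t<r. of_rat (c t) * b t) + of_rat c0)"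
proof -
  have "z - of_rat c0 \<in> Q_complex.span (b ` {..<r})
      \<longleftrightarrow> (\<exists>c. z - of_rat c0 = (\<Sum>t<r. of_rat (c t) * b t))" for c0
    by (rule Q_complex.in_span_image_iff[OF finite_lessThan])
  then show ?thesis
    by (auto simp: Q_complex.span_breakdown_eq diff_eq_eq)
qed

definition logs_alg_indep :: bool where
  "logs_alg_indep \<longleftrightarrow>
     (\<forall>n\<ge>1. \<forall>y :: nat \<Rightarrow> complex. (\<forall>i<n. y i \<in> Lset) \<and> q_indep n y \<longrightarrow> alg_indep n y)"

lemma span_Un_Rats: "Q_complex.span (S \<union> \<rat>) = Q_complex.span (insert 1 S)"
proof -
  have "\<rat> \<subseteq> Q_complex.span {1}"
    by (auto elim!: Rats_cases intro: Q_complex.span_scale[of 1 _ _, simplified] Q_complex.span_base)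
  then have "S \<union> \<rat> \<subseteq> Q_complex.span (insert 1 S)"
    using Q_complex.span_mono[of "{1}" "insert 1 S"] Q_complex.span_superset[of "insert 1 S"] by blast
  moreover have "insert 1 S \<subseteq> Q_complex.span (S \<union> \<rat>)"
    using Q_complex.span_superset[of "S \<union> \<rat>"] by auto
  ultimately show ?thesis
    by (simp add: Q_complex.span_eq)
qed

lemma exists_alg_indep_Lset_basis:
  assumes "logs_alg_indep" and E: "finite E" "E \<subseteq> qspan (Lset \<union> \<rat>)"
  obtains r b where "alg_indep r b" "E \<subseteq> Q_complex.span (insert 1 (b ` {..<r}))"
proof -
  from E(2) have "E \<subseteq> Q_complex.span (insert 1 Lset)"
    by (simp add: qspan_eq_span span_Un_Rats)
  then obtain B where B: "finite B" "B \<subseteq> Lset" "Q_complex.independent B"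
    "E \<subseteq> Q_complex.span (insert 1 B)"
    by (rule Q_complex.exists_finite_independent_span_insert[OF E(1)])
  obtain b where "bij_betw b {..<card B} B"
    using ex_bij_betw_nat_finite[OF B(1)] by (auto simp: lessThan_atLeast0)
  then have inj: "inj_on b {..<card B}" and B_eq: "b ` {..<card B} = B"
    by (auto simp: bij_betw_def)
  have "alg_indep (card B) b"
  proof (cases "card B = 0")
    case True
    then show ?thesis by (simp add: alg_indep_0)
  next
    case False
    moreover have "q_indep (card B) b"
      using inj B(3) by (simp add: q_indep_iff_independent B_eq)
    moreover have "\<forall>i<card B. b i \<in> Lset"
      using B(2) B_eq by auto
    ultimately show ?thesis
      using \<open>logs_alg_indep\<close> by (simp add: logs_alg_indep_def)
  qed
  moreover have "E \<subseteq> Q_complex.span (insert 1 (b ` {..<card B}))"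
    using B(4) by (simp add: B_eq)
  ultimately show ?thesis
    by (rule that)
qed

lemma q_linear_1_neq_0:
  assumes lin: "q_linear \<Phi>" and \<Phi>_l: "\<And>i. i < k \<Longrightarrow> \<Phi> (l i) = rf_var i"
    and "1 \<in> Q_complex.span (l ` {..<k})"
  shows "\<Phi> 1 \<noteq> 0"
proof
  interpret \<Phi>: Vector_Spaces.linear "\<lambda>c z. of_rat c * z" "\<lambda>c f. rf_const c * f" \<Phi>
    by (rule lin)
  obtain c where one: "1 = (\<Sum>i<k. of_rat (c i) * l i)"
    using assms(3) unfolding Q_complex.in_span_image_iff[OF finite_lessThan] by blast
  have "\<exists>i<k. c i \<noteq> 0"
  proof (rule ccontr)
    assume "\<not> (\<exists>i<k. c i \<noteq> 0)"
    then have "(\<Sum>i<k. of_rat (c i) * l i) = (0::complex)"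
      by simp
    with one show False
      by simp
  qed
  then obtain i where "i < k" "c i \<noteq> 0"
    by blast
  assume "\<Phi> 1 = 0"
  then have "(\<Sum>i<k. rf_const (c i) * rf_var i) = 0"
    using arg_cong[OF one, of \<Phi>] by (simp add: \<Phi>.sum \<Phi>.scale \<Phi>_l)
  from rf_vars_independent[OF this \<open>i < k\<close>] \<open>c i \<noteq> 0\<close> show False
    by simp
qed

lemma exists_q_linear_to_ratfun:
  assumes "q_indep k l"
  obtains \<Phi> where "q_linear \<Phi>" "\<And>i. i < k \<Longrightarrow> \<Phi> (l i) = rf_var i" "\<Phi> 1 \<noteq> 0"
proof -
  let ?L = "l ` {..<k}"
  from assms have inj: "inj_on l {..<k}" and indep: "Q_complex.independent ?L"
    by (simp_all add: q_indep_iff_independent)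
  define B where "B = (if 1 \<in> Q_complex.span ?L then ?L else insert 1 ?L)"
  have indep_B: "Q_complex.independent B"
    using indep by (simp add: B_def Q_complex.independent_insertI)
  define g where "g z = (if z \<in> ?L then rf_var (the_inv_into {..<k} l z) else 1)" for z
  define \<Phi> where "\<Phi> = Q_pair.construct B g"
  have lin: "q_linear \<Phi>"
    unfolding \<Phi>_def by (rule Q_pair.linear_construct[OF indep_B])
  have \<Phi>_basis: "\<Phi> z = g z" if "z \<in> B" for z
    unfolding \<Phi>_def by (rule Q_pair.construct_basis[OF indep_B that])
  have \<Phi>_l: "\<Phi> (l i) = rf_var i" if "i < k" for i
    using that inj \<Phi>_basis[of "l i"] by (simp add: B_def g_def the_inv_into_f_f)
  have "\<Phi> 1 \<noteq> 0"
  proof (cases "1 \<in> Q_complex.span ?L")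
    case True
    with lin \<Phi>_l show ?thesis
      by (rule q_linear_1_neq_0)
  next
    case False
    then have "1 \<in> B" "1 \<notin> ?L"
      using Q_complex.span_base[of 1 ?L] by (auto simp: B_def)
    then show ?thesis
      using \<Phi>_basis by (simp add: g_def)
  qed
  with that lin \<Phi>_l show ?thesis
    by blast
qed

section \<open>The generic matrix of a structural decomposition\<close>

lemma mat_entriesI: "i < dim_row M \<Longrightarrow> j < dim_col M \<Longrightarrow> M $$ (i, j) \<in> mat_entries M"
  unfolding mat_entries_def by blast

lemma finite_mat_entries: "finite (mat_entries M)"
  unfolding mat_entries_def by (rule finite_image_set2) auto

lemma struct_decomp_exists: "\<exists>k l Ms. struct_decomp M k l Ms"
proof -
  let ?E = "mat_entries M"
  obtain B where B: "B \<subseteq> ?E" "Q_complex.independent B" "?E \<subseteq> Q_complex.span B"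
    using Q_complex.maximal_independent_subset[of ?E] by blast
  have "finite B"
    using B(1) finite_mat_entries by (rule finite_subset)
  then obtain l where l: "bij_betw l {..<card B} B"
    using ex_bij_betw_nat_finite by (auto simp: lessThan_atLeast0)
  define k where "k = card B"
  have inj: "inj_on l {..<k}" and B_eq: "l ` {..<k} = B"
    using l by (auto simp: k_def bij_betw_def)
  define Ms where
    "Ms i = mat (dim_row M) (dim_col M) (\<lambda>(p, q). Q_complex.representation B (M $$ (p, q)) (l i))" for i
  have entry: "M $$ (p, q) = (\<Sum>i<k. l i * of_rat (Ms i $$ (p, q)))"
    if "p < dim_row M" "q < dim_col M" for p q
  proof -
    have "M $$ (p, q) \<in> Q_complex.span B"
      using that B(3) mat_entriesI by blast
    then have "M $$ (p, q) = (\<Sum>v\<in>B. of_rat (Q_complex.representation B (M $$ (p, q)) v) * v)"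
      using Q_complex.sum_representation_eq[OF B(2) _ \<open>finite B\<close> order.refl] by simp
    also have "\<dots> = (\<Sum>i<k. l i * of_rat (Ms i $$ (p, q)))"
      using that by (simp add: Ms_def mult.commute sum.reindex[OF inj] flip: B_eq)
    finally show ?thesis .
  qed
  have "struct_decomp M k l Ms"
    unfolding struct_decomp_def
  proof (intro conjI allI impI)
    show "q_indep k l"
      using inj B(2) by (simp add: q_indep_iff_independent B_eq)
    have "B \<subseteq> Q_complex.span ?E"
      using B(1) Q_complex.span_superset by blast
    with B(3) show "qspan (l ` {..<k}) = qspan ?E"
      by (simp add: B_eq qspan_eq_span Q_complex.span_eq)
    show "M = mat (dim_row M) (dim_col M) (\<lambda>(r, c). \<Sum>i<k. l i * of_rat (Ms i $$ (r, c)))"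
      by (rule eq_matI) (simp_all add: entry)
  qed (simp add: Ms_def)
  then show ?thesis
    by blast
qed

definition generic_qpoly_mat :: "nat \<Rightarrow> nat \<Rightarrow> nat \<Rightarrow> (nat \<Rightarrow> rat mat) \<Rightarrow> qpoly mat" where
  "generic_qpoly_mat m n k Ms = mat m n (\<lambda>(r, c). \<Sum>i<k. qconst (Ms i $$ (r, c)) * qvar i)"

lemma structural_rank_eq_rank_generic:
  obtains k l Ms where "struct_decomp M k l Ms"
    and "structural_rank M = vec_space.rank (dim_row M)
           (map_mat ratfun_of (generic_qpoly_mat (dim_row M) (dim_col M) k Ms))"
proof -
  define kLMs where "kLMs = (SOME (k, l, Ms). struct_decomp M k l Ms)"
  obtain k l Ms where kLMs_eq: "kLMs = (k, l, Ms)"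
    by (cases kLMs) auto
  have "(\<lambda>(k, l, Ms). struct_decomp M k l Ms) kLMs"
    unfolding kLMs_def by (rule someI_ex) (use struct_decomp_exists in auto)
  then have "struct_decomp M k l Ms"
    by (simp add: kLMs_eq)
  moreover have "map_mat ratfun_of (generic_qpoly_mat (dim_row M) (dim_col M) k Ms)
      = mat (dim_row M) (dim_col M) (\<lambda>(r, c). \<Sum>i<k. rf_var i * rf_const (Ms i $$ (r, c)))"
  proof -
    interpret ratfun_of: comm_ring_hom ratfun_of
      by (rule comm_ring_hom_ratfun_of)
    show ?thesis
      by (auto simp: generic_qpoly_mat_def rf_var_eq rf_const_eq ratfun_of.hom_sum
          ratfun_of.hom_mult mult.commute)
  qed
  ultimately show ?thesis
    using that by (simp add: structural_rank_def kLMs_def[symmetric] kLMs_eq)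
qed

lemma struct_decomp_entry:
  assumes "struct_decomp M k l Ms" "i < dim_row M" "j < dim_col M"
  shows "M $$ (i, j) = (\<Sum>t<k. of_rat (Ms t $$ (i, j)) * l t)"
proof -
  from assms(1) have "M = mat (dim_row M) (dim_col M) (\<lambda>(r, c). \<Sum>t<k. l t * of_rat (Ms t $$ (r, c)))"
    unfolding struct_decomp_def by blast
  from arg_cong[OF this, of "\<lambda>A. A $$ (i, j)"] assms(2,3) show ?thesis
    by (simp add: mult.commute)
qed

lemma struct_decomp_specialize:
  assumes "struct_decomp M k l Ms"
  shows "map_mat (qpoly_eval of_rat l) (generic_qpoly_mat (dim_row M) (dim_col M) k Ms) = M"
proof -
  interpret ev: comm_ring_hom "qpoly_eval of_rat l"
    by (rule comm_ring_hom_qpoly_eval[OF comm_ring_hom_of_rat])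
  show ?thesis
    by (rule eq_matI) (auto simp: generic_qpoly_mat_def ev.hom_sum ev.hom_mult
        struct_decomp_entry[OF assms] comm_ring_hom_of_rat)
qed

lemma struct_decomp_q_linear_image:
  assumes sd: "struct_decomp M k l Ms" and lin: "q_linear \<Phi>"
    and \<Phi>_l: "\<And>i. i < k \<Longrightarrow> \<Phi> (l i) = rf_var i"
  shows "map_mat \<Phi> M = map_mat ratfun_of (generic_qpoly_mat (dim_row M) (dim_col M) k Ms)"
proof -
  interpret \<Phi>: Vector_Spaces.linear "\<lambda>c z. of_rat c * z" "\<lambda>c f. rf_const c * f" \<Phi>
    by (rule lin)
  interpret ratfun_of: comm_ring_hom ratfun_of
    by (rule comm_ring_hom_ratfun_of)
  show ?thesis
    by (rule eq_matI) (auto simp: generic_qpoly_mat_def struct_decomp_entry[OF sd] \<Phi>.sum \<Phi>.scale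
        \<Phi>_l ratfun_of.hom_sum ratfun_of.hom_mult rf_var_eq rf_const_eq)
qed

section \<open>Vanishing minors\<close>

lemma exists_affine_qpoly_mat:
  fixes M :: "complex mat" and b :: "nat \<Rightarrow> complex"
  assumes M: "M \<in> carrier_mat m n"
    and entries: "\<And>i j. i < m \<Longrightarrow> j < n \<Longrightarrow> M $$ (i, j) \<in> Q_complex.span (insert 1 (b ` {..<r}))"
  obtains N where "\<And>i j. i < dim_row N \<Longrightarrow> j < dim_col N \<Longrightarrow> vars_below r (N $$ (i, j))"
    and "map_mat (qpoly_eval of_rat b) N = M"
    and "\<And>\<Phi>. q_linear \<Phi> \<Longrightarrow> \<Phi> 1 \<noteq> 0 \<Longrightarrow>
      map_mat (qpoly_eval rf_const (\<lambda>t. \<Phi> (b t) / \<Phi> 1)) N = inverse (\<Phi> 1) \<cdot>\<^sub>m map_mat \<Phi> M"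
proof -
  have "\<forall>i j. \<exists>c c0. i < m \<longrightarrow> j < n \<longrightarrow> M $$ (i, j) = (\<Sum>t<r. of_rat (c t) * b t) + of_rat c0"
    using entries by (auto simp: in_span_insert_1_iff)
  then obtain c c0 where M_ij: "\<And>i j. i < m \<Longrightarrow> j < n \<Longrightarrow>
      M $$ (i, j) = (\<Sum>t<r. of_rat (c i j t) * b t) + of_rat (c0 i j)"
    by metis
  define N where "N = mat m n (\<lambda>(i, j). (\<Sum>t<r. qconst (c i j t) * qvar t) + qconst (c0 i j))"
  have "vars_below r (N $$ (i, j))" if "i < dim_row N" "j < dim_col N" for i j
    using that by (auto simp: N_def intro!: vars_below_add vars_below_sum vars_below_mult
        vars_below_qconst vars_below_qvar)
  moreover interpret ev_b: comm_ring_hom "qpoly_eval of_rat b"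
    by (rule comm_ring_hom_qpoly_eval[OF comm_ring_hom_of_rat])
  have "map_mat (qpoly_eval of_rat b) N = M"
    using M by (auto simp: N_def M_ij comm_ring_hom_of_rat ev_b.hom_sum ev_b.hom_add ev_b.hom_mult)
  moreover have "map_mat (qpoly_eval rf_const (\<lambda>t. \<Phi> (b t) / \<Phi> 1)) N = inverse (\<Phi> 1) \<cdot>\<^sub>m map_mat \<Phi> M"
    if lin: "q_linear \<Phi>" and \<Phi>_1: "\<Phi> 1 \<noteq> 0" for \<Phi>
  proof (rule eq_matI)
    interpret \<Phi>: Vector_Spaces.linear "\<lambda>c z. of_rat c * z" "\<lambda>c f. rf_const c * f" \<Phi>
      by (rule lin)
    interpret ev_w: comm_ring_hom "qpoly_eval rf_const (\<lambda>t. \<Phi> (b t) / \<Phi> 1)"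
      by (rule comm_ring_hom_qpoly_eval[OF comm_ring_hom_rf_const])
    fix i j assume "i < dim_row (inverse (\<Phi> 1) \<cdot>\<^sub>m map_mat \<Phi> M)"
      and "j < dim_col (inverse (\<Phi> 1) \<cdot>\<^sub>m map_mat \<Phi> M)"
    with M have ij: "i < m" "j < n" by auto
    have "\<Phi> (M $$ (i, j)) = (\<Sum>t<r. rf_const (c i j t) * \<Phi> (b t)) + rf_const (c0 i j) * \<Phi> 1"
      using M_ij[OF ij] \<Phi>.scale[of "c0 i j" 1] by (simp add: \<Phi>.add \<Phi>.sum \<Phi>.scale)
    with ij M \<Phi>_1 show "map_mat (qpoly_eval rf_const (\<lambda>t. \<Phi> (b t) / \<Phi> 1)) N $$ (i, j)
        = (inverse (\<Phi> 1) \<cdot>\<^sub>m map_mat \<Phi> M) $$ (i, j)"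
      by (simp add: N_def comm_ring_hom_rf_const ev_w.hom_sum ev_w.hom_add ev_w.hom_mult
          field_simps sum_distrib_left)
  qed (use M in \<open>auto simp: N_def\<close>)
  ultimately show ?thesis
    using that by blast
qed

text \<open>
  \<open>\<Phi>\<close> is additive but not multiplicative, so it does not commute with determinants; dividing by
  \<open>\<Phi> 1\<close> turns \<open>\<Phi> M\<close> into a specialisation of the affine-form matrix \<open>N\<close>, whose minor is the zero
  polynomial because it vanishes at the algebraically independent point \<open>b\<close>.
\<close>

lemma det_submatrix_q_linear_image:
  fixes M :: "complex mat" and \<Phi> :: "complex \<Rightarrow> ratfun"
  assumes M: "M \<in> carrier_mat m n"
    and entries: "\<And>i j. i < m \<Longrightarrow> j < n \<Longrightarrow> M $$ (i, j) \<in> Q_complex.span (insert 1 (b ` {..<r}))"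
    and alg: "alg_indep r b" and lin: "q_linear \<Phi>" and \<Phi>_1: "\<Phi> 1 \<noteq> 0"
    and det_M: "det (submatrix M I J) = 0"
  shows "det (submatrix (map_mat \<Phi> M) I J) = 0"
proof -
  obtain N where vars: "\<And>i j. i < dim_row N \<Longrightarrow> j < dim_col N \<Longrightarrow> vars_below r (N $$ (i, j))"
    and eval_b: "map_mat (qpoly_eval of_rat b) N = M"
    and eval_\<Phi>: "map_mat (qpoly_eval rf_const (\<lambda>t. \<Phi> (b t) / \<Phi> 1)) N = inverse (\<Phi> 1) \<cdot>\<^sub>m map_mat \<Phi> M"
    using exists_affine_qpoly_mat[OF M entries] lin \<Phi>_1 by metis
  have "det (submatrix (map_mat (qpoly_eval rf_const (\<lambda>t. \<Phi> (b t) / \<Phi> 1)) N) I J) = 0"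
    by (rule det_submatrix_alg_indep_transfer[OF alg vars comm_ring_hom_rf_const])
      (simp_all add: eval_b det_M)
  then have "det (inverse (\<Phi> 1) \<cdot>\<^sub>m submatrix (map_mat \<Phi> M) I J) = 0"
    by (simp add: eval_\<Phi> smult_mat_def submatrix_map_mat)
  with \<Phi>_1 show ?thesis
    by (simp add: det_smult)
qed

lemma det_submatrix_eq_0_iff_generic:
  assumes "logs_alg_indep" and M: "M \<in> carrier_mat m n"
    and entries: "\<forall>i<m. \<forall>j<n. M $$ (i, j) \<in> qspan (Lset \<union> \<rat>)"
    and sd: "struct_decomp M k l Ms"
  shows "det (submatrix M I J) = 0
    \<longleftrightarrow> det (submatrix (map_mat ratfun_of (generic_qpoly_mat m n k Ms)) I J) = 0"
proof
  have "mat_entries M \<subseteq> qspan (Lset \<union> \<rat>)"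
    using entries M by (auto simp: mat_entries_def)
  then obtain r b where alg: "alg_indep r b"
    and span: "mat_entries M \<subseteq> Q_complex.span (insert 1 (b ` {..<r}))"
    using exists_alg_indep_Lset_basis[OF \<open>logs_alg_indep\<close> finite_mat_entries] by blast
  obtain \<Phi> where lin: "q_linear \<Phi>" and \<Phi>_l: "\<And>i. i < k \<Longrightarrow> \<Phi> (l i) = rf_var i" and "\<Phi> 1 \<noteq> 0"
    using exists_q_linear_to_ratfun sd unfolding struct_decomp_def by blast
  assume "det (submatrix M I J) = 0"
  with M span alg lin \<open>\<Phi> 1 \<noteq> 0\<close> have "det (submatrix (map_mat \<Phi> M) I J) = 0"
    by (intro det_submatrix_q_linear_image) (auto intro: mat_entriesI)
  then show "det (submatrix (map_mat ratfun_of (generic_qpoly_mat m n k Ms)) I J) = 0"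
    by (simp add: struct_decomp_q_linear_image[OF sd lin \<Phi>_l, unfolded carrier_matD[OF M]])
next
  assume "det (submatrix (map_mat ratfun_of (generic_qpoly_mat m n k Ms)) I J) = 0"
  then show "det (submatrix M I J) = 0"
    using det_submatrix_specialize[OF comm_ring_hom_of_rat, of "generic_qpoly_mat m n k Ms" I J l]
    by (simp add: struct_decomp_specialize[OF sd, unfolded carrier_matD[OF M]])
qed

theorem lemma4p12:
  assumes hyp: "\<forall>n\<ge>1. \<forall>y :: nat \<Rightarrow> complex.
                  (\<forall>i<n. y i \<in> Lset) \<and> q_indep n y \<longrightarrow> alg_indep n y"
  shows "\<forall>m n (M :: complex mat). m > 0 \<and> n > 0 \<and> M \<in> carrier_mat m n \<and>
           (\<forall>i<m. \<forall>j<n. M $$ (i, j) \<in> qspan (Lset \<union> \<rat>)) \<longrightarrow>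
           vec_space.rank m M = structural_rank M"
proof (intro allI impI)
  fix m n and M :: "complex mat"
  assume "m > 0 \<and> n > 0 \<and> M \<in> carrier_mat m n \<and> (\<forall>i<m. \<forall>j<n. M $$ (i, j) \<in> qspan (Lset \<union> \<rat>))"
  then have M: "M \<in> carrier_mat m n" and entries: "\<forall>i<m. \<forall>j<n. M $$ (i, j) \<in> qspan (Lset \<union> \<rat>)"
    by auto
  obtain k l Ms where sd: "struct_decomp M k l Ms"
    and rank_G: "structural_rank M = vec_space.rank m (map_mat ratfun_of (generic_qpoly_mat m n k Ms))"
    using structural_rank_eq_rank_generic[of M] M by auto
  have "map_mat ratfun_of (generic_qpoly_mat m n k Ms) \<in> carrier_mat m n"
    by (simp add: generic_qpoly_mat_def)
  with M show "vec_space.rank m M = structural_rank M"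
    unfolding rank_G
    using det_submatrix_eq_0_iff_generic[OF hyp[folded logs_alg_indep_def] M entries sd]
    by (intro antisym rank_le_if_nonzero_minors_preserved) auto
qed

end
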